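(* With the notation $\epsilon\in(0,4)$, $\mathcal{H}_\epsilon=\ell^2(\epsilon+4\mathbb{Z})$, $B(v)=\tfrac{27}{8}|v|\,\big||v+1|^{1/3}-|v-1|^{1/3}\big|^3$, $\tilde A(v)=|v|\,\big||v+1|-|v-1|\big|$, $(D\psi)(v)=\psi(v+2)-\psi(v-2)$, and $\hat\rho_1=-\tfrac{\rho_c}{8}D\,B\tilde A\,D$, $\hat\rho_2=-\tfrac{\rho_c}{8}B^{1/2}D\,\tilde A\,D\,B^{1/2}$ (functions acting by multiplication): $0$ is not an eigenvalue of $\hat\rho_1$ nor of $\hat\rho_2$, i.e. the equation $\hat\rho_i\psi=0$ has no nonzero normalizable solution $\psi\in\mathcal{H}_\epsilon$, so $\hat\rho_i$ is injective ($i=1,2$). *)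

theory Defs
  imports "HOL-Analysis.Analysis"
begin

definition lat :: "real \<Rightarrow> real set" where
  "lat \<epsilon> = {\<epsilon> + 4 * of_int n | n. True}"

definition in_H :: "real \<Rightarrow> (real \<Rightarrow> complex) \<Rightarrow> bool" where
  "in_H \<epsilon> \<psi> \<longleftrightarrow> (\<forall>v. v \<notin> lat \<epsilon> \<longrightarrow> \<psi> v = 0) \<and>
     ((\<lambda>v. (cmod (\<psi> v))\<^sup>2) summable_on lat \<epsilon>)"

definition Bfun :: "real \<Rightarrow> real" where
  "Bfun v = 27 / 8 * \<bar>v\<bar> * \<bar>\<bar>v + 1\<bar> powr (1/3) - \<bar>v - 1\<bar> powr (1/3)\<bar> ^ 3"

definition Atil :: "real \<Rightarrow> real" where
  "Atil v = \<bar>v\<bar> * \<bar>\<bar>v + 1\<bar> - \<bar>v - 1\<bar>\<bar>"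

definition Dop :: "(real \<Rightarrow> complex) \<Rightarrow> real \<Rightarrow> complex" where
  "Dop \<psi> v = \<psi> (v + 2) - \<psi> (v - 2)"

definition mult :: "(real \<Rightarrow> real) \<Rightarrow> (real \<Rightarrow> complex) \<Rightarrow> real \<Rightarrow> complex" where
  "mult f \<psi> v = complex_of_real (f v) * \<psi> v"

definition rho1 :: "real \<Rightarrow> (real \<Rightarrow> complex) \<Rightarrow> real \<Rightarrow> complex" where
  "rho1 \<rho>c \<psi> = (\<lambda>v. complex_of_real (- \<rho>c / 8) *
      Dop (mult Bfun (mult Atil (Dop \<psi>))) v)"

definition rho2 :: "real \<Rightarrow> (real \<Rightarrow> complex) \<Rightarrow> real \<Rightarrow> complex" where
  "rho2 \<rho>c \<psi> = (\<lambda>v. complex_of_real (- \<rho>c / 8) *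
      mult (\<lambda>w. sqrt (Bfun w)) (Dop (mult Atil (Dop (mult (\<lambda>w. sqrt (Bfun w)) \<psi>)))) v)"

end

theory Submission
  imports Defs
begin

(* Both operators are discrete Sturm-Liouville operators  D a D  on the lattice
   eps + 4Z:  with the flux  J(v) = a(v+2) (f(v+4) - f(v))  one has
   (D a D f)(v) = J(v) - J(v-4).  So  rho1 psi = 0  (weight a = B*A, f = psi) and
   rho2 psi = 0  (weight a = A, f = sqrt B * psi, after cancelling the nonvanishing
   outer factor sqrt B) both say that J is constant along the lattice.  Hence J = 0.
   (3) J = 0 and a nonvanishing off 0 make f 4-periodic except across v = -2; since
       0 is not in the lattice, every lattice point reaches infinity along a periodic
       ray, so decay forces f = 0.
   (4) The divergence hypothesis holds for both weights: B*A is bounded by 54 for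
       v >= 1, and A(v) = 2v there (harmonic series). *)

section \<open>The lattice\<close>

lemma lat_shift: "v \<in> lat e \<Longrightarrow> v + 4 * of_int k \<in> lat e"
proof -
  assume "v \<in> lat e"
  then obtain n where "v = e + 4 * of_int n" unfolding lat_def by auto
  hence "v + 4 * of_int k = e + 4 * of_int (n + k)" by (simp add: algebra_simps)
  thus ?thesis unfolding lat_def by blast
qed

lemma lat_plus: "v \<in> lat e \<Longrightarrow> v + 4 * real n \<in> lat e"
  using lat_shift[of v e "int n"] by simp

lemma lat_minus: "v \<in> lat e \<Longrightarrow> v - 4 * real n \<in> lat e"
  using lat_shift[of v e "- int n"] by simp

text \<open>For 0 < e < 4 the lattice avoids the origin; this is what lets every lattice
  point be connected to infinity without crossing the singular point of the weights.\<close>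
lemma zero_notin_lat:
  assumes "v \<in> lat e" "0 < e" "e < 4"
  shows "v \<noteq> 0"
proof -
  from assms obtain n where v: "v = e + 4 * of_int n" unfolding lat_def by auto
  have "n \<ge> 0 \<or> n \<le> -1" by linarith
  hence "(of_int n :: real) \<ge> 0 \<or> (of_int n :: real) \<le> -1" by auto
  thus ?thesis using v assms by auto
qed

lemma ray_eventually_ge_one: "\<forall>\<^sub>F n in sequentially. (1::real) \<le> w + 4 * real n"
proof -
  obtain N :: nat where "(1 - w) / 4 \<le> real N" using real_arch_simple by blast
  thus ?thesis unfolding eventually_sequentially by (intro exI[of _ N]) auto
qed

section \<open>Decay of square-summable functions\<close>

lemma square_summable_tendsto_zero:
  fixes f :: "'a \<Rightarrow> 'b::real_normed_vector"
  assumes sum: "(\<lambda>x. (norm (f x))\<^sup>2) summable_on S" and inj: "inj h" and range: "range h \<subseteq> S"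
  shows "(\<lambda>n. f (h n)) \<longlonglongrightarrow> 0"
proof -
  have "(\<lambda>x. (norm (f x))\<^sup>2) summable_on range h"
    using summable_on_subset_banach[OF sum range] .
  hence "((\<lambda>x. (norm (f x))\<^sup>2) \<circ> h) summable_on UNIV"
    using summable_on_reindex[OF inj] by blast
  hence "summable (\<lambda>n. (norm (f (h n)))\<^sup>2)"
    by (subst (asm) summable_on_UNIV_nonneg_real_iff) (auto simp: o_def)
  hence "(\<lambda>n. sqrt ((norm (f (h n)))\<^sup>2)) \<longlonglongrightarrow> sqrt 0"
    by (intro tendsto_real_sqrt summable_LIMSEQ_zero)
  thus ?thesis by (simp add: tendsto_norm_zero_iff)
qed

definition decays :: "real \<Rightarrow> (real \<Rightarrow> complex) \<Rightarrow> bool" where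
  "decays e f \<longleftrightarrow> (\<forall>v\<in>lat e. (\<lambda>n. f (v + 4 * real n)) \<longlonglongrightarrow> 0 \<and> (\<lambda>n. f (v - 4 * real n)) \<longlonglongrightarrow> 0)"

lemma in_H_decays:
  assumes "in_H e \<psi>"
  shows "decays e \<psi>"
  unfolding decays_def
proof (intro ballI conjI)
  fix v assume v: "v \<in> lat e"
  have sum: "(\<lambda>x. (norm (\<psi> x))\<^sup>2) summable_on lat e" using assms unfolding in_H_def by simp
  show "(\<lambda>n. \<psi> (v + 4 * real n)) \<longlonglongrightarrow> 0"
    by (rule square_summable_tendsto_zero[OF sum]) (auto simp: inj_def lat_plus v)
  show "(\<lambda>n. \<psi> (v - 4 * real n)) \<longlonglongrightarrow> 0"
    by (rule square_summable_tendsto_zero[OF sum]) (auto simp: inj_def lat_minus v)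
qed

lemma decays_mult:
  assumes dec: "decays e f" and bound: "\<And>x. 1 \<le> \<bar>x\<bar> \<Longrightarrow> \<bar>g x\<bar> \<le> K"
  shows "decays e (mult g f)"
proof -
  have mult_null: "(\<lambda>n. mult g f (x n)) \<longlonglongrightarrow> 0"
    if lim: "(\<lambda>n. f (x n)) \<longlonglongrightarrow> 0" and far: "\<forall>\<^sub>F n in sequentially. 1 \<le> \<bar>x n\<bar>" for x
  proof (rule tendsto_0_le[OF lim, where K = K])
    show "\<forall>\<^sub>F n in sequentially. norm (mult g f (x n)) \<le> norm (f (x n)) * K"
      using far by eventually_elim
        (simp add: mult_def norm_mult mult.commute mult_right_mono bound)
  qed
  show ?thesis unfolding decays_def
  proof (intro ballI conjI)
    fix v assume "v \<in> lat e"
    with dec have up: "(\<lambda>n. f (v + 4 * real n)) \<longlonglongrightarrow> 0"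
      and down: "(\<lambda>n. f (v - 4 * real n)) \<longlonglongrightarrow> 0" unfolding decays_def by auto
    show "(\<lambda>n. mult g f (v + 4 * real n)) \<longlonglongrightarrow> 0"
      using ray_eventually_ge_one[of v] by (intro mult_null[OF up]) (auto elim: eventually_mono)
    show "(\<lambda>n. mult g f (v - 4 * real n)) \<longlonglongrightarrow> 0"
      using ray_eventually_ge_one[of "- v"] by (intro mult_null[OF down]) (auto elim: eventually_mono)
  qed
qed

section \<open>Discrete Sturm-Liouville operators and their flux\<close>

definition flux :: "(real \<Rightarrow> real) \<Rightarrow> (real \<Rightarrow> complex) \<Rightarrow> real \<Rightarrow> complex" where
  "flux a f v = complex_of_real (a (v + 2)) * (f (v + 4) - f v)"

lemma Dop_mult_Dop: "Dop (mult a (Dop f)) v = flux a f v - flux a f (v - 4)"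
  unfolding Dop_def mult_def flux_def by (simp add: algebra_simps)

lemma mult_mult: "mult f (mult g h) = mult (\<lambda>w. f w * g w) h"
  unfolding mult_def by (simp add: fun_eq_iff)

lemma invariant_null_sequence:
  fixes g :: "nat \<Rightarrow> 'a::t2_space"
  assumes step: "\<And>n. g (Suc n) = g n" and lim: "g \<longlonglongrightarrow> c"
  shows "g 0 = c"
proof -
  have "g = (\<lambda>_. g 0)"
  proof
    show "g n = g 0" for n by (induction n) (simp_all add: step)
  qed
  hence "(\<lambda>_. g 0) \<longlonglongrightarrow> c" using lim by simp
  thus ?thesis by (simp add: LIMSEQ_const_iff)
qed

text \<open>Core estimate (2): a nonzero constant flux forces the increments of f to be
  c / a_n; they are summable because f converges, so 1/a_n would be summable.\<close>
lemma constant_flux_vanishes: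
  fixes f :: "nat \<Rightarrow> complex" and a :: "nat \<Rightarrow> real"
  assumes lim: "f \<longlonglongrightarrow> 0"
    and flux: "\<And>n. complex_of_real (a n) * (f (Suc n) - f n) = c"
    and diverges: "\<not> summable (\<lambda>n. 1 / a n)"
  shows "c = 0"
proof (rule ccontr)
  assume c: "c \<noteq> 0"
  have increment: "f (Suc n) - f n = c * complex_of_real (1 / a n)" for n
  proof -
    have "a n \<noteq> 0" using flux[of n] c by auto
    thus ?thesis using flux[of n] by (auto simp: field_simps)
  qed
  have "summable (\<lambda>n. f (Suc n) - f n)" using telescope_summable[OF lim] .
  hence "summable (\<lambda>n. inverse c * (f (Suc n) - f n))" by (rule summable_mult)
  hence "summable (\<lambda>n. complex_of_real (1 / a n))"
    using c by (simp add: increment mult.assoc[symmetric] del: of_real_divide)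
  hence "summable (\<lambda>n. 1 / a n)" by (simp only: summable_complex_of_real)
  thus False using diverges by blast
qed

theorem conserved_flux_forces_zero:
  assumes e: "0 < e" "e < 4"
    and dec: "decays e f"
    and conserved: "\<And>v. v \<in> lat e \<Longrightarrow> flux a f v = flux a f (v - 4)"
    and nonzero: "\<And>w. w \<noteq> 0 \<Longrightarrow> a w \<noteq> 0"
    and diverges: "\<And>w. \<not> summable (\<lambda>n. 1 / a (w + 4 * real n))"
    and v: "v \<in> lat e"
  shows "f v = 0"
proof -
  have no_flux: "flux a f v = 0" if v: "v \<in> lat e" for v
  proof (rule constant_flux_vanishes)
    have along: "flux a f (v + 4 * real n) = flux a f v" for n
    proof (induction n)
      case (Suc n)
      thus ?case using conserved[OF lat_plus[OF v, of "Suc n"]] by (simp add: algebra_simps)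
    qed simp
    show "(\<lambda>n. f (v + 4 * real n)) \<longlonglongrightarrow> 0" using dec v unfolding decays_def by blast
    show "complex_of_real (a (v + 2 + 4 * real n))
            * (f (v + 4 * real (Suc n)) - f (v + 4 * real n)) = flux a f v" for n
      using along[of n] unfolding flux_def by (simp add: algebra_simps)
    show "\<not> summable (\<lambda>n. 1 / a (v + 2 + 4 * real n))" by (rule diverges)
  qed
  have periodic: "f (w + 4) = f w" if "w \<in> lat e" "w + 2 \<noteq> 0" for w
    using no_flux[OF that(1)] nonzero[OF that(2)] unfolding flux_def by simp
  have "v \<noteq> 0" using zero_notin_lat[OF v e] .
  then consider "0 < v" | "v < 0" by linarith
  thus ?thesis
  proof cases
    case 1
    have "f (v + 4 * real 0) = 0"
    proof (rule invariant_null_sequence[where g = "\<lambda>n. f (v + 4 * real n)"])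
      show "f (v + 4 * real (Suc n)) = f (v + 4 * real n)" for n
        using periodic[OF lat_plus[OF v, of n]] 1 by (simp add: algebra_simps)
      show "(\<lambda>n. f (v + 4 * real n)) \<longlonglongrightarrow> 0" using dec v unfolding decays_def by blast
    qed
    thus ?thesis by simp
  next
    case 2
    have "f (v - 4 * real 0) = 0"
    proof (rule invariant_null_sequence[where g = "\<lambda>n. f (v - 4 * real n)"])
      show "f (v - 4 * real (Suc n)) = f (v - 4 * real n)" for n
        using periodic[OF lat_minus[OF v, of "Suc n"]] 2 by (simp add: algebra_simps)
      show "(\<lambda>n. f (v - 4 * real n)) \<longlonglongrightarrow> 0" using dec v unfolding decays_def by blast
    qed
    thus ?thesis by simp
  qed
qed

section \<open>Divergence criteria for the reciprocal weight\<close>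

lemma reciprocal_diverges_bounded:
  fixes a :: "real \<Rightarrow> real"
  assumes bound: "\<And>x. 1 \<le> x \<Longrightarrow> 0 < a x \<and> a x \<le> K"
  shows "\<not> summable (\<lambda>n. 1 / a (w + 4 * real n))"
proof
  assume "summable (\<lambda>n. 1 / a (w + 4 * real n))"
  hence lim: "(\<lambda>n. 1 / a (w + 4 * real n)) \<longlonglongrightarrow> 0" by (rule summable_LIMSEQ_zero)
  have K: "0 < K" using bound[of 1] by auto
  have "\<forall>\<^sub>F n in sequentially. 1 / K \<le> 1 / a (w + 4 * real n)"
    using ray_eventually_ge_one[of w] by eventually_elim (simp add: bound frac_le)
  hence "1 / K \<le> 0" using lim by (intro tendsto_lowerbound) auto
  thus False using K by simp
qed

text \<open>A weight growing linearly far to the right: comparison with the harmonic series.\<close>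
lemma reciprocal_diverges_linear:
  fixes a :: "real \<Rightarrow> real"
  assumes linear: "\<And>x. 1 \<le> x \<Longrightarrow> a x = 2 * x"
  shows "\<not> summable (\<lambda>n. 1 / a (w + 4 * real n))"
proof
  assume "summable (\<lambda>n. 1 / a (w + 4 * real n))"
  hence sum: "summable (\<lambda>n. (2 * (\<bar>w\<bar> + 4)) * (1 / a (w + 4 * real n)))"
    by (rule summable_mult)
  obtain N where N: "\<And>n. N \<le> n \<Longrightarrow> 1 \<le> w + 4 * real n"
    using ray_eventually_ge_one[of w] unfolding eventually_sequentially by blast
  have "summable (\<lambda>n. inverse (real n))"
  proof (rule summable_comparison_test'[OF sum, where N = "max N 1"])
    fix n assume n: "max N 1 \<le> n"
    hence pos: "1 \<le> w + 4 * real n" and n1: "1 \<le> real n" using N by auto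
    have "\<bar>w\<bar> * 1 \<le> \<bar>w\<bar> * real n" using n1 by (intro mult_left_mono) auto
    hence "w + 4 * real n \<le> (\<bar>w\<bar> + 4) * real n"
      by (simp add: algebra_simps)
    hence "inverse (real n) \<le> (\<bar>w\<bar> + 4) / (w + 4 * real n)"
      using pos n1 by (simp add: field_simps)
    also have "\<dots> = (2 * (\<bar>w\<bar> + 4)) * (1 / a (w + 4 * real n))"
      using linear[OF pos] pos by (simp add: field_simps)
    finally show "norm (inverse (real n)) \<le> (2 * (\<bar>w\<bar> + 4)) * (1 / a (w + 4 * real n))"
      by simp
  qed
  thus False using not_summable_harmonic by blast
qed

section \<open>The weights B and A\<close>

lemma cube_of_cube_root: "0 \<le> x \<Longrightarrow> (x powr (1/3)) ^ 3 = (x::real)"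
proof (cases "x = 0")
  case False
  assume "0 \<le> x"
  hence "0 < x" using False by simp
  hence "(x powr (1/3)) ^ 3 = (x powr (1/3)) powr (real 3)" by (subst powr_realpow) auto
  also have "\<dots> = x" using \<open>0 < x\<close> by (simp add: powr_powr)
  finally show ?thesis .
qed simp

lemma Bfun_nonneg: "0 \<le> Bfun w"
  unfolding Bfun_def by simp

lemma Bfun_even: "Bfun (- w) = Bfun w"
  unfolding Bfun_def by (simp add: abs_minus_commute) (smt (verit))

lemma Bfun_nonzero: "w \<noteq> 0 \<Longrightarrow> Bfun w \<noteq> 0"
proof
  assume w: "w \<noteq> 0" and "Bfun w = 0"
  hence "\<bar>w + 1\<bar> powr (1/3) = \<bar>w - 1\<bar> powr (1/3)" unfolding Bfun_def by simp
  hence "(\<bar>w + 1\<bar> powr (1/3)) ^ 3 = (\<bar>w - 1\<bar> powr (1/3)) ^ 3" by simp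
  hence "\<bar>w + 1\<bar> = \<bar>w - 1\<bar>" by (simp add: cube_of_cube_root)
  thus False using w by arith
qed

lemma Atil_nonzero: "w \<noteq> 0 \<Longrightarrow> Atil w \<noteq> 0"
  unfolding Atil_def by (auto simp: abs_if split: if_splits)

lemma Atil_linear: "1 \<le> w \<Longrightarrow> Atil w = 2 * w"
  unfolding Atil_def by simp

text \<open>Decay of B: with a = (w+1)^(1/3), b = (w-1)^(1/3) one has
  (a - b)(a^2 + ab + b^2) = 2, hence a - b <= 2/a^2 and B(w) <= 27 w / (w+1)^2.\<close>
lemma Bfun_upper_bound:
  assumes w: "1 \<le> w"
  shows "Bfun w \<le> 27 * w / (w + 1)^2"
proof -
  define a where "a = (w + 1) powr (1/3)"
  define b where "b = (w - 1) powr (1/3)"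
  have a3: "a^3 = w + 1" and b3: "b^3 = w - 1"
    unfolding a_def b_def using w by (simp_all add: cube_of_cube_root)
  have b0: "0 \<le> b" unfolding b_def by simp
  have a0: "0 < a" unfolding a_def using w by simp
  have ab: "b \<le> a" unfolding a_def b_def using w by (intro powr_mono2) auto
  have factor: "(a - b) * (a^2 + a*b + b^2) = 2"
    using a3 b3 by (simp add: algebra_simps power2_eq_square power3_eq_cube)
  have "(a - b) * a^2 \<le> (a - b) * (a^2 + a*b + b^2)"
    using ab a0 b0 by (intro mult_left_mono) auto
  hence "a - b \<le> 2 / a^2" using factor a0 by (simp add: field_simps)
  hence "(a - b)^3 \<le> (2 / a^2)^3" using ab by (intro power_mono) auto
  also have "\<dots> = 8 / (a^3)^2" by (simp add: power_divide flip: power_mult)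
  also have "\<dots> = 8 / (w + 1)^2" using a3 by simp
  finally have cube: "(a - b)^3 \<le> 8 / (w + 1)^2" .
  have "Bfun w = 27/8 * w * (a - b)^3"
    unfolding Bfun_def using w ab unfolding a_def b_def by simp
  also have "\<dots> \<le> 27/8 * w * (8 / (w + 1)^2)" using cube w by (intro mult_left_mono) auto
  finally show ?thesis by simp
qed

lemma Bfun_bounded: "1 \<le> \<bar>w\<bar> \<Longrightarrow> Bfun w \<le> 27"
proof -
  have right: "Bfun x \<le> 27" if x: "1 \<le> x" for x
  proof -
    have "27 * x \<le> 27 * (x + 1)^2" using x by (simp add: power2_eq_square algebra_simps)
    hence "27 * x / (x + 1)^2 \<le> 27" using x by (simp add: pos_divide_le_eq)
    thus ?thesis using Bfun_upper_bound[OF x] by linarith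
  qed
  assume "1 \<le> \<bar>w\<bar>"
  hence "1 \<le> w \<or> 1 \<le> - w" by linarith
  thus ?thesis using right[of w] right[of "- w"] by (auto simp: Bfun_even)
qed

lemma BA_bounded:
  assumes w: "1 \<le> w"
  shows "0 < Bfun w * Atil w \<and> Bfun w * Atil w \<le> 54"
proof
  show "0 < Bfun w * Atil w"
    using Bfun_nonneg[of w] Bfun_nonzero[of w] Atil_linear[OF w] w by simp
  have "Bfun w * Atil w \<le> 27 * w / (w + 1)^2 * (2 * w)"
    unfolding Atil_linear[OF w] using Bfun_upper_bound[OF w] w by (intro mult_right_mono) auto
  also have "\<dots> = 54 * (w * w) / (w + 1)^2" by (simp add: field_simps)
  also have "\<dots> \<le> 54"
  proof -
    have "54 * (w * w) \<le> 54 * (w + 1)^2" using w by (simp add: power2_eq_square algebra_simps)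
    thus ?thesis using w by (simp add: pos_divide_le_eq)
  qed
  finally show "Bfun w * Atil w \<le> 54" .
qed

lemma rho1_kernel_trivial:
  assumes e: "0 < e" "e < 4" and rc: "0 < \<rho>c" and H: "in_H e \<psi>"
    and kernel: "\<forall>v\<in>lat e. rho1 \<rho>c \<psi> v = 0"
  shows "\<psi> = (\<lambda>_. 0)"
proof -
  let ?a = "\<lambda>w. Bfun w * Atil w"
  have rho1_flux: "rho1 \<rho>c \<psi> v = complex_of_real (- \<rho>c / 8) * (flux ?a \<psi> v - flux ?a \<psi> (v - 4))" for v
    unfolding rho1_def mult_mult Dop_mult_Dop ..
  have "\<psi> v = 0" if v: "v \<in> lat e" for v
  proof (rule conserved_flux_forces_zero[OF e in_H_decays[OF H] _ _ _ v])
    show "flux ?a \<psi> w = flux ?a \<psi> (w - 4)" if "w \<in> lat e" for w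
      using kernel that rc by (simp add: rho1_flux)
    show "?a w \<noteq> 0" if "w \<noteq> 0" for w using that Bfun_nonzero Atil_nonzero by simp
    show "\<not> summable (\<lambda>n. 1 / ?a (w + 4 * real n))" for w
      by (rule reciprocal_diverges_bounded) (rule BA_bounded)
  qed
  thus ?thesis using H unfolding in_H_def by blast
qed

lemma rho2_kernel_trivial:
  assumes e: "0 < e" "e < 4" and rc: "0 < \<rho>c" and H: "in_H e \<psi>"
    and kernel: "\<forall>v\<in>lat e. rho2 \<rho>c \<psi> v = 0"
  shows "\<psi> = (\<lambda>_. 0)"
proof -
  let ?sqrtB = "\<lambda>w. sqrt (Bfun w)"
  let ?u = "mult ?sqrtB \<psi>"
  have rho2_flux: "rho2 \<rho>c \<psi> v = complex_of_real (- \<rho>c / 8)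
      * (complex_of_real (?sqrtB v) * (flux Atil ?u v - flux Atil ?u (v - 4)))" for v
    unfolding rho2_def by (simp add: Dop_mult_Dop mult_def)
  have sqrtB_nonzero: "?sqrtB v \<noteq> 0" if "v \<in> lat e" for v
    using Bfun_nonzero[OF zero_notin_lat[OF that e]] by simp
  have u_zero: "?u v = 0" if v: "v \<in> lat e" for v
  proof (rule conserved_flux_forces_zero[OF e _ _ Atil_nonzero _ v])
    show "decays e ?u"
      by (rule decays_mult[OF in_H_decays[OF H], where K = "sqrt 27"])
        (simp add: Bfun_bounded Bfun_nonneg)
    show "flux Atil ?u w = flux Atil ?u (w - 4)" if "w \<in> lat e" for w
    proof -
      have "rho2 \<rho>c \<psi> w = 0" using kernel that by blast
      thus ?thesis using rc sqrtB_nonzero[OF that] by (simp add: rho2_flux)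
    qed
    show "\<not> summable (\<lambda>n. 1 / Atil (w + 4 * real n))" for w
      by (rule reciprocal_diverges_linear) (rule Atil_linear)
  qed
  have "\<psi> v = 0" if "v \<in> lat e" for v
    using u_zero[OF that] sqrtB_nonzero[OF that] by (simp add: mult_def)
  thus ?thesis using H unfolding in_H_def by blast
qed

theorem mainTheorem4:
  fixes \<epsilon> \<rho>c :: real
  assumes "0 < \<epsilon>" and "\<epsilon> < 4" and "0 < \<rho>c"
  shows "(\<forall>\<psi>. in_H \<epsilon> \<psi> \<and> (\<forall>v\<in>lat \<epsilon>. rho1 \<rho>c \<psi> v = 0) \<longrightarrow> \<psi> = (\<lambda>_. 0))
       \<and> (\<forall>\<psi>. in_H \<epsilon> \<psi> \<and> (\<forall>v\<in>lat \<epsilon>. rho2 \<rho>c \<psi> v = 0) \<longrightarrow> \<psi> = (\<lambda>_. 0))"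
  using rho1_kernel_trivial[OF assms] rho2_kernel_trivial[OF assms] by blast

end
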